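(* The word complexity function $\mathcal{C}$ of $\mathrm{Sub}_\tau$ satisfies $\mathcal{C}(1)=4$, $\mathcal{C}(2)=6$, $\mathcal{C}(3)=8$. Moreover, for every integer $n\geq 2$ and every $L=2^n+k$ with $0\le k<2^n$, $$\mathcal{C}(L)=\begin{cases} 2^{n+1}+2^{n-1}+3k, & 0\le k<2^{n-1},\\ 2^{n+1}+2^{n}+2k, & 2^{n-1}\le k<2^{n}.\end{cases}$$
   Context: Let $\mathcal{A}=\{a,x,y,z\}$ and let $\tau$ be the substitution (monoid morphism on finite words over $\mathcal{A}$) defined by $\tau(a)=axa$, $\tau(x)=y$, $\tau(y)=z$, $\tau(z)=x$. For a finite word $w$, $\mathrm{Sub}(w)$ denotes the set of finite (contiguous) subwords of $w$. Let $\mathrm{Sub}_\tau=\bigcup_{s\in\mathcal{A},\,n\in\mathbb{N}\cup\{0\}}\mathrm{Sub}(\tau^n(s))$. The word complexity is $\mathcal{C}(L)=$ the number of elements of $\mathrm{Sub}_\tau$ of length $L$. *)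

theory Defs
  imports Main "HOL-Library.Sublist"
begin

datatype letter = A | X | Y | Z

fun tau_letter :: "letter \<Rightarrow> letter list" where
  "tau_letter A = [A, X, A]"
| "tau_letter X = [Y]"
| "tau_letter Y = [Z]"
| "tau_letter Z = [X]"

definition tau :: "letter list \<Rightarrow> letter list" where
  "tau w = concat (map tau_letter w)"

definition Sub :: "'a list \<Rightarrow> 'a list set" where
  "Sub w = {u. sublist u w}"

definition Sub_tau :: "letter list set" where
  "Sub_tau = (\<Union>s. \<Union>n::nat. Sub ((tau ^^ n) [s]))"

definition complexity :: "nat \<Rightarrow> nat" where
  "complexity L = card {w \<in> Sub_tau. length w = L}"

end

theory Submission
  imports Defs "HOL-Computational_Algebra.Primes"
begin

text \<open>
  \<open>\<tau>\<^sup>n(a)\<close> is the prefix of length \<open>2\<^sup>n\<^sup>+\<^sup>1 - 1\<close> of the infinite word \<open>u\<close> whose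
  \<open>i\<close>-th letter is determined by the 2-adic valuation \<open>v(i+1)\<close>: it is \<open>a\<close> if \<open>v = 0\<close> and
  otherwise \<open>x, y, z\<close> cyclically in \<open>v - 1\<close>. In a window of \<open>L \<ge> 2\<close> consecutive
  positions the valuation attains its maximum at a unique position \<open>r\<close>, and every other
  letter of the window is given by the valuation of its distance to \<open>r\<close>; so the factors
  of length \<open>L\<close> are exactly the words determined by a pivot \<open>(r, c)\<close> with \<open>r < L\<close> and
  \<open>c \<in> {x, y, z}\<close>. Two pivots \<open>r < r'\<close> give the same word iff \<open>r' = r + 2\<^sup>e\<close>, both carry
  the letter of valuation \<open>e\<close>, \<open>r < 2\<^sup>e\<close> and \<open>r + 2\<^sup>e < L \<le> r + 2\<^sup>e\<^sup>+\<^sup>1\<close>. For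
  \<open>L = 2\<^sup>n + k\<close> only \<open>e = n\<close> (with \<open>r < k\<close>) and \<open>e = n - 1\<close> (with \<open>k \<le> r < 2\<^sup>n\<^sup>-\<^sup>1\<close>)
  occur, so \<open>\<C>(L) = 3L - k - max 0 (2\<^sup>n\<^sup>-\<^sup>1 - k)\<close>.
\<close>

subsection \<open>The 2-adic valuation\<close>

lemma multiplicity_two_power [simp]: "multiplicity 2 ((2::nat) ^ e) = e"
  by (simp add: multiplicity_prime_power)

lemma multiplicity_two_double_power [simp]: "multiplicity 2 (2 * (2::nat) ^ e) = Suc e"
  using multiplicity_two_power[of "Suc e"] by (simp del: multiplicity_two_power)

lemma multiplicity_two_less:
  assumes "0 < s" "s < (2::nat) ^ e"
  shows "multiplicity 2 s < e"
proof -
  have "(2::nat) ^ multiplicity 2 s \<le> s"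
    using assms(1) by (intro dvd_imp_le multiplicity_dvd)
  with assms(2) have "(2::nat) ^ multiplicity 2 s < 2 ^ e" by linarith
  then show ?thesis by simp
qed

lemma multiplicity_diff_left:
  fixes x y p :: nat
  assumes "multiplicity p x < multiplicity p y" "y < x" "y \<noteq> 0"
  shows "multiplicity p (x - y) = multiplicity p x"
proof -
  obtain z where x: "x = z + y" "z \<noteq> 0" using less_imp_add_positive[OF assms(2)] by force
  have unit: "\<not> is_unit p" using assms(1) multiplicity_unit_left by (metis not_less0)
  consider "multiplicity p z < multiplicity p y" | "multiplicity p y < multiplicity p z"
    | "multiplicity p z = multiplicity p y" by linarith
  then show ?thesis
  proof cases
    case 1
    then show ?thesis using x assms(3) multiplicity_sum_lt[of p z y] by simp
  next
    case 2
    then have "multiplicity p x = multiplicity p y"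
      using x assms(3) multiplicity_sum_lt[of p y z] by (simp add: add.commute)
    with assms(1) show ?thesis by simp
  next
    case 3
    then have "p ^ multiplicity p y dvd x"
      using x by (metis dvd_add multiplicity_dvd)
    then have "multiplicity p y \<le> multiplicity p x"
      using x unit by (intro multiplicity_geI) simp_all
    with assms(1) show ?thesis by simp
  qed
qed

lemma multiplicity_diff_right:
  fixes x y p :: nat
  assumes "multiplicity p x < multiplicity p y" "x < y" "x \<noteq> 0"
  shows "multiplicity p (y - x) = multiplicity p x"
proof -
  obtain z where y: "y = z + x" "z \<noteq> 0" using less_imp_add_positive[OF assms(2)] by force
  consider "multiplicity p z < multiplicity p x" | "multiplicity p x < multiplicity p z"
    | "multiplicity p z = multiplicity p x" by linarith
  then show ?thesis
  proof cases
    case 1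
    then have "multiplicity p y = multiplicity p z"
      using y assms(3) multiplicity_sum_lt[of p z x] by simp
    with 1 assms(1) show ?thesis by simp
  next
    case 2
    then have "multiplicity p y = multiplicity p x"
      using y assms(3) multiplicity_sum_lt[of p x z] by (simp add: add.commute)
    with assms(1) show ?thesis by simp
  qed (simp add: y)
qed

lemma multiplicity_two_power_plus:
  "0 < s \<Longrightarrow> s < 2 ^ e \<Longrightarrow> multiplicity 2 (2 ^ e + s) = multiplicity 2 (s::nat)"
  using multiplicity_sum_lt[of 2 s "2 ^ e"] multiplicity_two_less by (simp add: add.commute)

lemma multiplicity_two_power_minus:
  "0 < s \<Longrightarrow> s < 2 ^ e \<Longrightarrow> multiplicity 2 (2 ^ e - s) = multiplicity 2 (s::nat)"
  using multiplicity_diff_right[of 2 s "2 ^ e"] multiplicity_two_less by simp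

lemma multiplicity_two_gap:
  fixes d :: nat
  assumes "d \<noteq> 0" "d \<noteq> 2 ^ multiplicity 2 d"
  shows "2 * 2 ^ multiplicity 2 d < d"
proof -
  obtain m where m: "d = 2 ^ multiplicity 2 d * m" "\<not> 2 dvd m"
    using multiplicity_decompose'[of d 2] assms(1) by auto
  then have "m \<noteq> 1" "m \<noteq> 2" using assms(2) by auto
  with m(2) have "2 < m" by presburger
  then show ?thesis by (subst (2) m(1)) simp
qed

lemma power_two_dvd_between:
  fixes a b :: nat
  assumes "a < b" "2 ^ M dvd a" "2 ^ M dvd b"
  obtains c where "a \<le> c" "c \<le> b" "2 ^ Suc M dvd c"
proof -
  obtain \<alpha> \<beta> where a: "a = 2 ^ M * \<alpha>" and b: "b = 2 ^ M * \<beta>" using assms(2,3) by blast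
  with assms(1) have "\<alpha> < \<beta>" by simp
  show ?thesis
  proof (cases "even \<alpha>")
    case True
    then show ?thesis using that[of a] a assms(1) by auto
  next
    case False
    then obtain \<gamma> where "\<alpha> + 1 = 2 * \<gamma>" by (metis evenE odd_even_add odd_one)
    then have "2 ^ Suc M dvd 2 ^ M * (\<alpha> + 1)" by simp
    moreover have "a \<le> 2 ^ M * (\<alpha> + 1)" using a by simp
    moreover have "2 ^ M * (\<alpha> + 1) \<le> b"
      unfolding b using \<open>\<alpha> < \<beta>\<close> by (intro mult_le_mono2) simp
    ultimately show ?thesis using that by blast
  qed
qed

subsection \<open>The words \<open>\<tau>\<^sup>n(a)\<close> and their factors\<close>

definition cycle_letter :: "nat \<Rightarrow> letter" where
  "cycle_letter m = (if m mod 3 = 0 then X else if m mod 3 = 1 then Y else Z)"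

fun val_letter :: "nat \<Rightarrow> letter" where
  "val_letter 0 = A"
| "val_letter (Suc m) = cycle_letter m"

definition ruler_word :: "nat \<Rightarrow> letter" where
  "ruler_word i = val_letter (multiplicity 2 (Suc i))"

definition factor :: "nat \<Rightarrow> nat \<Rightarrow> letter list" where
  "factor L p = map ruler_word [p..<p + L]"

lemma val_letter_Suc_neq: "val_letter (Suc e) \<noteq> val_letter e"
  by (cases e) (simp_all add: cycle_letter_def mod_Suc)

lemma val_letter_eq_A_iff: "val_letter e = A \<longleftrightarrow> e = 0"
  by (cases e) (simp_all add: cycle_letter_def)

lemma exists_cycle_letter:
  assumes "c \<noteq> A"
  obtains i where "k \<le> i" "cycle_letter i = c"
proof -
  have "c \<in> {cycle_letter 0, cycle_letter 1, cycle_letter 2}"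
    using assms by (cases c) (simp_all add: cycle_letter_def)
  then obtain j where "cycle_letter j = c" by blast
  moreover have "cycle_letter (3 * k + j) = cycle_letter j"
    by (simp add: cycle_letter_def)
  ultimately show ?thesis using that[of "3 * k + j"] by simp
qed

lemma tau_append: "tau (xs @ ys) = tau xs @ tau ys"
  by (simp add: tau_def)

lemma funpow_tau_append: "(tau ^^ n) (xs @ ys) = (tau ^^ n) xs @ (tau ^^ n) ys"
  by (induction n) (simp_all add: tau_append)

lemma funpow_tau_cycle_letter: "(tau ^^ n) [cycle_letter m] = [cycle_letter (m + n)]"
proof (induction n)
  case (Suc n)
  have "tau [cycle_letter k] = [cycle_letter (Suc k)]" for k
    by (auto simp: tau_def cycle_letter_def mod_Suc)
  with Suc show ?case by simp
qed simp

lemma ruler_word_shift: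
  assumes "i < 2 ^ Suc n - 1"
  shows "ruler_word (2 ^ Suc n + i) = ruler_word i"
  unfolding ruler_word_def using assms multiplicity_two_power_plus[of "Suc i" "Suc n"] by simp

lemma ruler_word_before_power: "ruler_word (2 ^ Suc m - 1) = cycle_letter m"
proof -
  have "Suc (2 ^ Suc m - 1) = 2 ^ Suc m" by simp
  then show ?thesis by (simp only: ruler_word_def multiplicity_two_power val_letter.simps)
qed

lemma funpow_tau_A: "(tau ^^ n) [A] = map ruler_word [0..<2 ^ Suc n - 1]"
proof (induction n)
  case 0
  then show ?case by (simp add: ruler_word_def)
next
  case (Suc n)
  define N :: nat where "N = 2 ^ Suc n - 1"
  have SucN: "Suc N = 2 ^ Suc n" by (simp add: N_def)
  have len: "2 ^ Suc (Suc n) - 1 = N + Suc N" by (simp add: N_def)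
  have "map ruler_word [Suc N..<N + Suc N] = map (\<lambda>i. ruler_word (2 ^ Suc n + i)) [0..<N]"
    by (simp only: map_add_upt[symmetric] map_map o_def SucN add.commute)
  also have "\<dots> = map ruler_word [0..<N]"
    using ruler_word_shift by (simp add: N_def)
  finally have right: "map ruler_word [Suc N..<N + Suc N] = map ruler_word [0..<N]" .
  have "(tau ^^ Suc n) [A] = (tau ^^ n) ([A] @ [cycle_letter 0] @ [A])"
    by (simp only: funpow_Suc_right o_apply) (simp add: tau_def cycle_letter_def)
  also have "\<dots> = (tau ^^ n) [A] @ (tau ^^ n) [cycle_letter 0] @ (tau ^^ n) [A]"
    by (simp only: funpow_tau_append)
  also have "\<dots> = map ruler_word [0..<N] @ [ruler_word N] @ map ruler_word [0..<N]"
    unfolding Suc.IH funpow_tau_cycle_letter N_def ruler_word_before_power by simp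
  also have "\<dots> = map ruler_word [0..<N + Suc N]"
  proof -
    have "[0..<N + Suc N] = [0..<N] @ [N..<N + Suc N]"
      by (rule upt_add_eq_append) simp
    moreover have "[N..<N + Suc N] = N # [Suc N..<N + Suc N]"
      by (rule upt_conv_Cons) simp
    ultimately show ?thesis by (simp only: map_append list.map right append.simps)
  qed
  also have "\<dots> = map ruler_word [0..<2 ^ Suc (Suc n) - 1]"
    unfolding len ..
  finally show ?case .
qed

lemma sublist_uptE:
  assumes "sublist xs [p..<q]"
  obtains r where "xs = [r..<r + length xs]"
proof (cases "xs = []")
  case False
  obtain ps ss where split: "[p..<q] = ps @ xs @ ss" using assms by (auto simp: sublist_def)
  have "length ps + length xs + length ss = q - p" using arg_cong[OF split, of length] by simp
  moreover from False have "0 < length xs" by simp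
  ultimately have "p + length ps + length xs \<le> q" by linarith
  moreover have "xs = take (length xs) (drop (length ps) [p..<q])" by (simp add: split)
  ultimately show ?thesis using that by (simp add: take_upt)
qed (use that in simp)

lemma sublist_uptI:
  assumes "p \<le> r" "r + L \<le> q"
  shows "sublist [r..<r + L] [p..<q]"
proof -
  have "[p..<q] = [p..<r] @ [r..<q]"
    using upt_add_eq_append[of p r "q - r"] assms by simp
  moreover have "[r..<q] = [r..<r + L] @ [r + L..<q]"
    using upt_add_eq_append[of r "r + L" "q - (r + L)"] assms by simp
  ultimately show ?thesis by (metis sublist_appendI)
qed

lemma factor_one: "factor 1 p = [ruler_word p]"
  by (simp add: factor_def)

lemma funpow_tau_singleton_factor: "\<exists>M p. (tau ^^ n) [s] = factor M p"
proof (cases "s = A")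
  case True
  show ?thesis
    by (rule exI[of _ "2 ^ Suc n - 1"], rule exI[of _ 0]) (simp add: True funpow_tau_A factor_def)
next
  case False
  then obtain i where "s = cycle_letter i" by (metis exists_cycle_letter)
  then have "(tau ^^ n) [s] = factor 1 (2 ^ Suc (i + n) - 1)"
    by (simp only: funpow_tau_cycle_letter factor_one ruler_word_before_power)
  then show ?thesis by blast
qed

lemma sublist_factorE:
  assumes "sublist w (factor M p)"
  obtains q where "w = factor (length w) q"
proof -
  obtain xs where xs: "sublist xs [p..<p + M]" "w = map ruler_word xs"
    using assms sublist_map_rightE by (fastforce simp: factor_def)
  from xs(1) obtain r where "xs = [r..<r + length xs]" by (rule sublist_uptE)
  with xs(2) show ?thesis using that[of r] by (simp add: factor_def)
qed

lemma factor_sublist_funpow_tau_A: "sublist (factor L p) ((tau ^^ (p + L)) [A])"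
proof -
  have "p + L \<le> 2 ^ Suc (p + L) - 1" using less_exp[of "p + L"] power_Suc[of "2::nat" "p + L"] by linarith
  then have "sublist [p..<p + L] [0..<2 ^ Suc (p + L) - 1]" by (intro sublist_uptI) simp_all
  then show ?thesis unfolding factor_def funpow_tau_A by (rule map_mono_sublist)
qed

lemma Sub_tau_eq_factors: "{w \<in> Sub_tau. length w = L} = range (factor L)"
proof
  show "{w \<in> Sub_tau. length w = L} \<subseteq> range (factor L)"
  proof clarify
    fix w assume "w \<in> Sub_tau"
    then obtain n s where "sublist w ((tau ^^ n) [s])" by (auto simp: Sub_tau_def Sub_def)
    moreover obtain M p where "(tau ^^ n) [s] = factor M p" using funpow_tau_singleton_factor by blast
    ultimately show "w \<in> range (factor (length w))" by (metis rangeI sublist_factorE)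
  qed
  show "range (factor L) \<subseteq> {w \<in> Sub_tau. length w = L}"
    using factor_sublist_funpow_tau_A by (fastforce simp: Sub_tau_def Sub_def factor_def)
qed

subsection \<open>Factors as pivot words\<close>

definition pivot_word :: "nat \<Rightarrow> nat \<times> letter \<Rightarrow> letter list" where
  "pivot_word L x = map (\<lambda>j. if j = fst x then snd x
     else val_letter (multiplicity 2 (if j < fst x then fst x - j else j - fst x))) [0..<L]"

lemma length_pivot_word [simp]: "length (pivot_word L x) = L"
  by (simp add: pivot_word_def)

lemma nth_pivot_word:
  "j < L \<Longrightarrow> pivot_word L (r, c) ! j =
     (if j = r then c else val_letter (multiplicity 2 (if j < r then r - j else j - r)))"
  by (simp add: pivot_word_def)

lemma length_factor [simp]: "length (factor L p) = L"
  by (simp add: factor_def)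

lemma nth_factor: "j < L \<Longrightarrow> factor L p ! j = val_letter (multiplicity 2 (Suc p + j))"
  by (simp add: factor_def ruler_word_def)

lemma factor_eq_pivot_word:
  assumes "r < L"
    and max: "\<And>j. j < L \<Longrightarrow> j \<noteq> r \<Longrightarrow> multiplicity 2 (Suc p + j) < multiplicity 2 (Suc p + r)"
  shows "factor L p = pivot_word L (r, val_letter (multiplicity 2 (Suc p + r)))"
proof (rule nth_equalityI)
  fix j assume "j < length (factor L p)"
  then have j: "j < L" by simp
  consider "j = r" | "j < r" | "r < j" by linarith
  then show "factor L p ! j = pivot_word L (r, val_letter (multiplicity 2 (Suc p + r))) ! j"
  proof cases
    case 2
    then have "multiplicity 2 (Suc p + r - (Suc p + j)) = multiplicity 2 (Suc p + j)"
      using max[OF j] by (intro multiplicity_diff_right) simp_all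
    with 2 j show ?thesis by (simp add: nth_factor nth_pivot_word)
  next
    case 3
    then have "multiplicity 2 (Suc p + j - (Suc p + r)) = multiplicity 2 (Suc p + j)"
      using max[OF j] by (intro multiplicity_diff_left) simp_all
    with 3 j show ?thesis by (simp add: nth_factor nth_pivot_word)
  qed (simp_all add: j assms(1) nth_factor nth_pivot_word)
qed simp

lemma unique_max_multiplicity_two:
  fixes a L :: nat
  assumes "0 < a" "0 < L"
  obtains r where "r < L"
    "\<And>j. j < L \<Longrightarrow> j \<noteq> r \<Longrightarrow> multiplicity 2 (a + j) < multiplicity 2 (a + r)"
proof -
  define v where "v j = multiplicity 2 (a + j)" for j
  have fin: "finite (v ` {..<L})" and ne: "v ` {..<L} \<noteq> {}" using assms(2) by auto
  obtain r where r: "r < L" "v r = Max (v ` {..<L})" using Max_in[OF fin ne] by auto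
  have le: "v j \<le> v r" if "j < L" for j using Max_ge[OF fin] that r(2) by simp
  have "v j < v r" if j: "j < L" "j \<noteq> r" for j
  proof (rule ccontr)
    assume "\<not> v j < v r"
    then have "2 ^ v r dvd a + j" "2 ^ v r dvd a + r"
      using multiplicity_dvd'[of "v r" "2::nat"] by (simp_all add: v_def)
    moreover have "a + min j r < a + max j r" using j(2) by linarith
    ultimately obtain c where c: "a + min j r \<le> c" "c \<le> a + max j r" "2 ^ Suc (v r) dvd c"
      by (metis power_two_dvd_between min_def max_def)
    then have "Suc (v r) \<le> multiplicity 2 c"
      using assms(1) by (intro multiplicity_geI) simp_all
    moreover have "c = a + (c - a)" "c - a < L" using c j r(1) by auto
    ultimately have "v r < v (c - a)" by (simp add: v_def)
    with le[OF \<open>c - a < L\<close>] show False by simp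
  qed
  with r(1) show ?thesis using that by (simp add: v_def)
qed

lemma letter_neq_A_iff: "c \<noteq> A \<longleftrightarrow> c \<in> {X, Y, Z}"
  by (cases c) simp_all

lemma val_letter_in_XYZ: "0 < e \<Longrightarrow> val_letter e \<in> {X, Y, Z}"
  by (metis letter_neq_A_iff val_letter_eq_A_iff neq0_conv)

lemma factor_in_pivot_words:
  assumes "2 \<le> L"
  shows "factor L p \<in> pivot_word L ` ({0..<L} \<times> {X, Y, Z})"
proof -
  obtain r where r: "r < L"
    "\<And>j. j < L \<Longrightarrow> j \<noteq> r \<Longrightarrow> multiplicity 2 (Suc p + j) < multiplicity 2 (Suc p + r)"
    using unique_max_multiplicity_two[of "Suc p" L] assms by auto
  have "\<exists>j<2. even (Suc p + j)" by presburger
  then obtain j where j: "j < 2" "even (Suc p + j)" by blast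
  then have "0 < multiplicity 2 (Suc p + j)"
    by (simp add: multiplicity_gt_zero_iff)
  moreover have "multiplicity 2 (Suc p + j) \<le> multiplicity 2 (Suc p + r)"
    using r(2)[of j] j(1) assms by (cases "j = r") auto
  ultimately have "val_letter (multiplicity 2 (Suc p + r)) \<in> {X, Y, Z}"
    by (intro val_letter_in_XYZ) linarith
  moreover have "factor L p = pivot_word L (r, val_letter (multiplicity 2 (Suc p + r)))"
    using r by (rule factor_eq_pivot_word)
  ultimately show ?thesis using r(1) by force
qed

lemma pivot_word_in_factors:
  assumes "r < L" "c \<noteq> A"
  shows "pivot_word L (r, c) \<in> range (factor L)"
proof -
  obtain i where i: "L \<le> i" "cycle_letter i = c" using exists_cycle_letter[OF assms(2)] .
  define M where "M = Suc i"
  have M: "val_letter M = c" "L < 2 ^ M"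
    using i less_exp[of "Suc i"] unfolding M_def by simp_all
  define p where "p = 2 ^ M - Suc r"
  have "factor L p = pivot_word L (r, c)"
  proof (rule nth_equalityI)
    fix j assume "j < length (factor L p)"
    then have j: "j < L" by simp
    then have pj: "Suc p + j = 2 ^ M - r + j" using M(2) assms(1) by (simp add: p_def)
    consider "j = r" | "j < r" | "r < j" by linarith
    then show "factor L p ! j = pivot_word L (r, c) ! j"
    proof cases
      case 1
      then show ?thesis using j M assms(1) pj by (simp add: nth_factor nth_pivot_word)
    next
      case 2
      then have "2 ^ M - r + j = 2 ^ M - (r - j)" using M(2) assms(1) by simp
      moreover have "multiplicity 2 (2 ^ M - (r - j)) = multiplicity 2 (r - j)"
        using 2 M(2) assms(1) by (intro multiplicity_two_power_minus) simp_all
      ultimately show ?thesis using 2 j pj by (simp add: nth_factor nth_pivot_word)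
    next
      case 3
      then have "2 ^ M - r + j = 2 ^ M + (j - r)" using M(2) assms(1) by simp
      moreover have "multiplicity 2 (2 ^ M + (j - r)) = multiplicity 2 (j - r)"
        using 3 M(2) j by (intro multiplicity_two_power_plus) simp_all
      ultimately show ?thesis using 3 j pj by (simp add: nth_factor nth_pivot_word)
    qed
  qed simp
  then show ?thesis by (metis rangeI)
qed

lemma range_factor_eq_pivot_words:
  "2 \<le> L \<Longrightarrow> range (factor L) = pivot_word L ` ({0..<L} \<times> {X, Y, Z})"
  using factor_in_pivot_words pivot_word_in_factors by (fastforce simp: letter_neq_A_iff)

subsection \<open>Coincidences between pivot words\<close>

lemma pivot_word_eqD:
  assumes eq: "pivot_word L (r, c) = pivot_word L (r', c')" and r: "r < r'" "r' < L"
  shows "\<exists>e. r' = r + 2 ^ e \<and> c = val_letter e \<and> c' = val_letter e \<and> r < 2 ^ e \<and> L \<le> r + 2 ^ Suc e"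
proof -
  have agree: "pivot_word L (r, c) ! j = pivot_word L (r', c') ! j" if "j < L" for j
    using eq by simp
  define e where "e = multiplicity 2 (r' - r)"
  txt \<open>Each way the conclusion can fail yields a position at which one word sees
    valuation \<open>e\<close> and the other valuation \<open>e + 1\<close>.\<close>
  have c: "c = val_letter e" "c' = val_letter e"
    using agree[of r] agree[of r'] r by (simp_all add: nth_pivot_word e_def)
  have gap: "r' - r = 2 ^ e"
  proof (rule ccontr)
    assume "r' - r \<noteq> 2 ^ e"
    then have less: "2 * 2 ^ e < r' - r"
      using multiplicity_two_gap[of "r' - r"] r(1) by (simp add: e_def)
    have "multiplicity 2 (r' - r - 2 * 2 ^ e) = e"
      using less by (subst multiplicity_diff_left) (simp_all add: e_def)
    moreover have between: "r + 2 * 2 ^ e < r'" using less by linarith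
    ultimately have "pivot_word L (r', c') ! (r + 2 * 2 ^ e) = val_letter e"
      using r by (simp add: nth_pivot_word)
    moreover have "pivot_word L (r, c) ! (r + 2 * 2 ^ e) = val_letter (Suc e)"
      using between r by (simp add: nth_pivot_word del: val_letter.simps)
    ultimately show False using agree between r(2) val_letter_Suc_neq by (metis less_trans)
  qed
  have r': "r' = r + 2 ^ e" using gap r(1) by simp
  have left: "r < 2 ^ e"
  proof (rule ccontr)
    assume "\<not> r < 2 ^ e"
    then obtain j where j: "r = j + 2 ^ e" by (metis add.commute le_add_diff_inverse not_less)
    then have "pivot_word L (r, c) ! j = val_letter e"
      "pivot_word L (r', c') ! j = val_letter (Suc e)"
      using r r' by (simp_all add: nth_pivot_word del: val_letter.simps flip: mult_2)
    moreover have "j < L" using j r by linarith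
    ultimately show False using agree[of j] val_letter_Suc_neq[of e] by metis
  qed
  have right: "L \<le> r + 2 ^ Suc e"
  proof (rule ccontr)
    assume "\<not> L \<le> r + 2 ^ Suc e"
    then have "pivot_word L (r, c) ! (r + 2 * 2 ^ e) = val_letter (Suc e)"
      "pivot_word L (r', c') ! (r + 2 * 2 ^ e) = val_letter e"
      using r r' by (simp_all add: nth_pivot_word del: val_letter.simps)
    moreover have "r + 2 * 2 ^ e < L" using \<open>\<not> L \<le> r + 2 ^ Suc e\<close> by simp
    ultimately show False using agree[of "r + 2 * 2 ^ e"] val_letter_Suc_neq[of e] by metis
  qed
  show ?thesis using r' c left right by blast
qed

lemma pivot_word_eqI:
  assumes "r < 2 ^ e" "r + 2 ^ e < L" "L \<le> r + 2 ^ Suc e"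
  shows "pivot_word L (r, val_letter e) = pivot_word L (r + 2 ^ e, val_letter e)"
proof (rule nth_equalityI)
  fix j assume "j < length (pivot_word L (r, val_letter e))"
  then have j: "j < L" by simp
  consider "j \<le> r" | "r < j" "j < r + 2 ^ e" | "r + 2 ^ e \<le> j" by linarith
  then show "pivot_word L (r, val_letter e) ! j = pivot_word L (r + 2 ^ e, val_letter e) ! j"
  proof cases
    case 1
    have "multiplicity 2 (2 ^ e + (r - j)) = multiplicity 2 (r - j)" if "j < r"
      using that assms(1) by (intro multiplicity_two_power_plus) simp_all
    with 1 j show ?thesis by (auto simp: nth_pivot_word add.commute)
  next
    case 2
    have "multiplicity 2 (r + 2 ^ e - j) = multiplicity 2 (j - r)"
      using 2 multiplicity_two_power_minus[of "j - r" e] by (simp add: add.commute)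
    with 2 j show ?thesis by (auto simp: nth_pivot_word)
  next
    case 3
    have "multiplicity 2 (2 ^ e + (j - (r + 2 ^ e))) = multiplicity 2 (j - (r + 2 ^ e))"
      if "r + 2 ^ e < j"
      using that j assms(3) by (intro multiplicity_two_power_plus) simp_all
    with 3 j show ?thesis by (auto simp: nth_pivot_word)
  qed
qed simp

lemma card_image_eq_card_minus_repeats:
  fixes g :: "'a \<Rightarrow> nat"
  assumes "finite S"
    and inj: "\<And>x y. x \<in> S \<Longrightarrow> y \<in> S \<Longrightarrow> f x = f y \<Longrightarrow> g x = g y \<Longrightarrow> x = y"
  shows "card (f ` S) = card S - card {x \<in> S. \<exists>y\<in>S. g y < g x \<and> f y = f x}"
proof -
  define D where "D = {x \<in> S. \<exists>y\<in>S. g y < g x \<and> f y = f x}"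
  have "f ` S \<subseteq> f ` (S - D)"
  proof
    fix z assume "z \<in> f ` S"
    then obtain y where y: "y \<in> S" "f y = z" "\<And>y'. y' \<in> S \<Longrightarrow> f y' = z \<Longrightarrow> g y \<le> g y'"
      using ex_has_least_nat[of "\<lambda>y. y \<in> S \<and> f y = z" _ g] by blast
    have "y \<notin> D"
    proof
      assume "y \<in> D"
      then obtain y' where "y' \<in> S" "g y' < g y" "f y' = f y" by (auto simp: D_def)
      with y(2) y(3)[of y'] show False by simp
    qed
    with y show "z \<in> f ` (S - D)" by blast
  qed
  then have image: "f ` (S - D) = f ` S" by blast
  have "inj_on f (S - D)"
  proof (rule inj_onI)
    fix x y assume x: "x \<in> S - D" and y: "y \<in> S - D" and eq: "f x = f y"
    have "\<not> g x < g y" using x y eq by (auto simp: D_def)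
    moreover have "\<not> g y < g x" using x y eq by (auto simp: D_def)
    ultimately show "x = y" using x y eq inj by simp
  qed
  then have "card (f ` S) = card (S - D)" by (metis card_image image)
  also have "\<dots> = card S - card D"
    using assms(1) by (intro card_Diff_subset) (auto simp: D_def)
  finally show ?thesis by (simp add: D_def)
qed

lemma pivot_word_repeat_cases:
  assumes n: "n = Suc m" and k: "k < 2 ^ n" and L: "L = 2 ^ n + k"
    and eq: "pivot_word L (r, c) = pivot_word L (r', c')" and r: "r < r'" "r' < L"
  shows "r < k \<and> r' = r + 2 ^ n \<and> c' = val_letter n \<or>
    k \<le> r \<and> r < 2 ^ m \<and> r' = r + 2 ^ m \<and> c' = val_letter m"
proof -
  obtain e where e: "r' = r + 2 ^ e" "c' = val_letter e" "r < 2 ^ e" "L \<le> r + 2 ^ Suc e"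
    using pivot_word_eqD[OF eq r] by blast
  have "e \<le> n"
  proof (rule ccontr)
    assume "\<not> e \<le> n"
    then have "2 ^ Suc n \<le> (2::nat) ^ e" by (intro power_increasing) simp_all
    with e(1) r(2) L k show False by simp
  qed
  moreover have "m \<le> e"
  proof (rule ccontr)
    assume "\<not> m \<le> e"
    then have "2 ^ Suc (Suc e) \<le> (2::nat) ^ n" using n by (intro power_increasing) simp_all
    with e(3,4) L show False by simp
  qed
  ultimately consider "e = n" | "e = m" using n by linarith
  then show ?thesis
  proof cases
    case 1
    with e(1) r(2) L show ?thesis using e by simp
  next
    case 2
    with e(3,4) L n show ?thesis using e by simp
  qed
qed

lemma pivot_word_repeats:
  assumes n: "n = Suc m" "1 \<le> m" and k: "k < 2 ^ n" and L: "L = 2 ^ n + k"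
  defines "S \<equiv> {0..<L} \<times> {X, Y, Z}"
  shows "{x \<in> S. \<exists>y\<in>S. fst y < fst x \<and> pivot_word L y = pivot_word L x} =
    (\<lambda>r. (r + 2 ^ n, val_letter n)) ` {..<k} \<union> (\<lambda>r. (r + 2 ^ m, val_letter m)) ` {k..<2 ^ m}"
    (is "?repeats = ?long \<union> ?short")
proof (intro equalityI subsetI)
  fix x assume "x \<in> ?repeats"
  then obtain y where "x \<in> S" "y \<in> S" "fst y < fst x" "pivot_word L y = pivot_word L x"
    by blast
  moreover obtain r' c' where x: "x = (r', c')" by fastforce
  moreover obtain r c where "y = (r, c)" by fastforce
  ultimately have "pivot_word L (r, c) = pivot_word L (r', c')" "r < r'" "r' < L"
    by (simp_all add: S_def)
  from pivot_word_repeat_cases[OF n(1) k L this]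
  show "x \<in> ?long \<union> ?short" by (auto simp: x image_iff)
next
  have pow: "(2::nat) ^ n = 2 * 2 ^ m" using n by simp
  have letters: "val_letter n \<in> {X, Y, Z}" "val_letter m \<in> {X, Y, Z}"
    by (rule val_letter_in_XYZ, use n in simp)+
  have "?long \<subseteq> ?repeats"
  proof (rule image_subsetI)
    fix r assume r: "r \<in> {..<k}"
    have "pivot_word L (r, val_letter n) = pivot_word L (r + 2 ^ n, val_letter n)"
      using r k L n(1) by (intro pivot_word_eqI) simp_all
    moreover have "(r, val_letter n) \<in> S" "(r + 2 ^ n, val_letter n) \<in> S"
      using r L letters by (simp_all add: S_def)
    ultimately show "(r + 2 ^ n, val_letter n) \<in> ?repeats"
      by (intro CollectI conjI bexI[of _ "(r, val_letter n)"]) simp_all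
  qed
  moreover have "?short \<subseteq> ?repeats"
  proof (rule image_subsetI)
    fix r assume r: "r \<in> {k..<2 ^ m}"
    have "pivot_word L (r, val_letter m) = pivot_word L (r + 2 ^ m, val_letter m)"
      using r L pow by (intro pivot_word_eqI) simp_all
    moreover have "(r, val_letter m) \<in> S" "(r + 2 ^ m, val_letter m) \<in> S"
      using r L pow letters by (simp_all add: S_def)
    ultimately show "(r + 2 ^ m, val_letter m) \<in> ?repeats"
      by (intro CollectI conjI bexI[of _ "(r, val_letter m)"]) simp_all
  qed
  ultimately show "x \<in> ?repeats" if "x \<in> ?long \<union> ?short" for x using that by blast
qed

lemma complexity_eq_card_pivot_words:
  "2 \<le> L \<Longrightarrow> complexity L = card (pivot_word L ` ({0..<L} \<times> {X, Y, Z}))"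
  by (simp add: complexity_def Sub_tau_eq_factors range_factor_eq_pivot_words)

lemma complexity_two_power_plus:
  assumes n: "n = Suc m" "1 \<le> m" and k: "k < 2 ^ n"
  shows "complexity (2 ^ n + k) = 3 * (2 ^ n + k) - (k + (2 ^ m - k))"
proof -
  define L where "L = 2 ^ n + k"
  define S where "S = {0..<L} \<times> {X, Y, Z}"
  have "(2::nat) ^ 1 \<le> 2 ^ n" using n by (intro power_increasing) simp_all
  then have "complexity L = card (pivot_word L ` S)"
    by (simp add: complexity_eq_card_pivot_words L_def S_def)
  also have "\<dots> = card S - card {x \<in> S. \<exists>y\<in>S. fst y < fst x \<and> pivot_word L y = pivot_word L x}"
  proof (rule card_image_eq_card_minus_repeats)
    fix x y assume "x \<in> S" "y \<in> S" "pivot_word L x = pivot_word L y" "fst x = fst y"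
    then show "x = y"
      using arg_cong[OF \<open>pivot_word L x = pivot_word L y\<close>, of "\<lambda>w. w ! fst x"]
      by (cases x, cases y) (simp add: S_def nth_pivot_word)
  qed (simp add: S_def)
  also have "{x \<in> S. \<exists>y\<in>S. fst y < fst x \<and> pivot_word L y = pivot_word L x} =
      (\<lambda>r. (r + 2 ^ n, val_letter n)) ` {..<k} \<union> (\<lambda>r. (r + 2 ^ m, val_letter m)) ` {k..<2 ^ m}"
    unfolding S_def by (rule pivot_word_repeats[OF n k L_def])
  also have "card \<dots> = k + (2 ^ m - k)"
    using val_letter_Suc_neq[of m] n(1)
    by (subst card_Un_disjoint) (auto simp: card_image inj_on_def)
  finally show ?thesis by (simp add: S_def L_def card_cartesian_product)
qed

lemma complexity_one: "complexity 1 = 4"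
proof -
  have "c \<in> range ruler_word" for c
  proof (cases "c = A")
    case True
    have "ruler_word 0 = A" by (simp add: ruler_word_def)
    with True show ?thesis by (metis rangeI)
  next
    case False
    then obtain i where "cycle_letter i = c" using exists_cycle_letter by blast
    then show ?thesis using ruler_word_before_power by (metis rangeI)
  qed
  then have "range ruler_word = UNIV" by blast
  moreover have "factor 1 = (\<lambda>c. [c]) \<circ> ruler_word"
    by (rule ext) (simp only: factor_one o_apply)
  ultimately have "range (factor 1) = (\<lambda>c. [c]) ` UNIV"
    by (simp only: image_comp[symmetric])
  moreover have "card ((\<lambda>c. [c]) ` (UNIV :: letter set)) = card (UNIV :: letter set)"
    by (rule card_image) (simp add: inj_on_def)
  moreover have "card (UNIV :: letter set) = 4"
  proof -
    have "(UNIV :: letter set) = {A, X, Y, Z}" using letter.exhaust by blast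
    then show ?thesis unfolding \<open>UNIV = {A, X, Y, Z}\<close> by simp
  qed
  ultimately show ?thesis
    by (simp add: complexity_def Sub_tau_eq_factors)
qed

lemma complexity_two: "complexity 2 = 6"
proof -
  have "{0..<2::nat} \<times> {X, Y, Z} = {(0, X), (0, Y), (0, Z), (1, X), (1, Y), (1, Z)}" by auto
  then show ?thesis
    by (simp add: complexity_eq_card_pivot_words pivot_word_def upt_rec cycle_letter_def)
qed

lemma complexity_three: "complexity 3 = 8"
proof -
  have "{0..<3::nat} \<times> {X, Y, Z} =
      {(0, X), (0, Y), (0, Z), (1, X), (1, Y), (1, Z), (2, X), (2, Y), (2, Z)}" by auto
  moreover have "multiplicity 2 (Suc (Suc 0)) = Suc 0"
  proof -
    have "Suc (Suc 0) = (2::nat) ^ 1" by simp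
    then show ?thesis by (simp only: multiplicity_two_power One_nat_def)
  qed
  ultimately show ?thesis
    by (simp add: complexity_eq_card_pivot_words pivot_word_def upt_rec cycle_letter_def
        insert_commute)
qed

theorem theorem1:
  shows "complexity 1 = 4 \<and> complexity 2 = 6 \<and> complexity 3 = 8 \<and>
    (\<forall>n k. n \<ge> 2 \<longrightarrow> k < 2 ^ n \<longrightarrow>
       complexity (2 ^ n + k) =
         (if k < 2 ^ (n - 1) then 2 ^ (n + 1) + 2 ^ (n - 1) + 3 * k
          else 2 ^ (n + 1) + 2 ^ n + 2 * k))"
proof (intro conjI allI impI)
  fix n k :: nat assume "2 \<le> n" "k < 2 ^ n"
  define m where "m = n - 1"
  have n: "n = Suc m" "1 \<le> m" using \<open>2 \<le> n\<close> by (simp_all add: m_def)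
  then have "complexity (2 ^ n + k) = 3 * (2 * 2 ^ m + k) - (k + (2 ^ m - k))"
    using complexity_two_power_plus[OF n \<open>k < 2 ^ n\<close>] by simp
  then show "complexity (2 ^ n + k) =
      (if k < 2 ^ (n - 1) then 2 ^ (n + 1) + 2 ^ (n - 1) + 3 * k else 2 ^ (n + 1) + 2 ^ n + 2 * k)"
    using n(1) by simp
qed (fact complexity_one complexity_two complexity_three)+

end
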